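(* Consider a first-price auction with participation revelation in an environment where the number of agents is random, drawn from a commonly known distribution with at least two agents almost surely. Agents have independent private valuations drawn i.i.d. from a continuous distribution $F$ and are risk-neutral. Then there exists an equilibrium in which every agent $i$ registers (indicates the intention to participate) and then bids $b^e(v_i,n)$, where $n$ is the number of registered bidders announced by the auctioneer.
   Context: First-price auction with participation revelation: (1) agents indicate their intention to bid (register); (2) the auctioneer announces $n$, the number of registered agents; (3) registered agents submit sealed bids, and only bids of registered agents are accepted; (4) the highest bidder receives the good and pays his bid, and all other agents pay $0$. There is no participation fee. An agent with valuation $v$ who wins and pays $t$ gets utility $v-t$; an agent who does not win and pays nothing gets $0$. For an integer $m\ge 2$, $b^e(v,m)=v-F(v)^{-(m-1)}\int_0^v F(u)^{m-1}\,du$. *)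

theory Defs
  imports "HOL-Probability.Probability"
begin

definition be :: "(real \<Rightarrow> real) \<Rightarrow> real \<Rightarrow> nat \<Rightarrow> real" where
  "be F v m = v - inverse (F v ^ (m - 1)) * integral {0..v} (\<lambda>u. F u ^ (m - 1))"

text \<open>The highest bid wins and pays its bid; ties are broken
  uniformly at random; losers pay 0.\<close>
definition win_util :: "real measure \<Rightarrow> (real \<Rightarrow> real) \<Rightarrow> nat \<Rightarrow> real \<Rightarrow> real \<Rightarrow> real" where
  "win_util M beta k v b =
     (\<integral>\<omega>. (if (\<forall>j<k. beta (\<omega> j) \<le> b)
            then (v - b) / real (Suc (card {j. j < k \<and> beta (\<omega> j) = b}))
            else 0) \<partial>(PiM {..<k} (\<lambda>_. M)))"

text \<open>Interim expected payoff of an agent with valuation v, whose belief about the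
  number n of registered agents (counting himself, when he registers) is q, when all
  other agents register and bid strat w n, and he chooses registration r and bid
  function d (of the announced n).\<close>
definition interim_payoff ::
  "real measure \<Rightarrow> (real \<Rightarrow> nat \<Rightarrow> real) \<Rightarrow> nat pmf \<Rightarrow> real \<Rightarrow> bool \<Rightarrow> (nat \<Rightarrow> real) \<Rightarrow> real" where
  "interim_payoff M strat q v r d =
     measure_pmf.expectation q
       (\<lambda>n. if r then win_util M (\<lambda>w. strat w n) (n - 1) v (d n) else 0)"

definition all_register_equilibrium ::
  "real measure \<Rightarrow> nat pmf \<Rightarrow> (real \<Rightarrow> nat \<Rightarrow> real) \<Rightarrow> bool" where
  "all_register_equilibrium M p strat \<longleftrightarrow>
     (AE v in M. \<forall>q. set_pmf q \<subseteq> set_pmf p \<longrightarrow>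
        (\<forall>r d. interim_payoff M strat q v r d \<le> interim_payoff M strat q v True (strat v)))"

end

theory Submission
  imports Defs
begin

text \<open>
  Fix the announced number \<open>n\<close> and let the \<open>k = n - 1\<close> rivals bid \<open>bid = be (cdf M) _ n\<close>.
  With \<open>F = cdf M\<close>, \<open>G = F ^ k\<close> (the distribution of the highest rival valuation) and
  \<open>surplus v = \<integral>\<^sub>0\<^sup>v G\<close>, one has \<open>bid v = v - surplus v / G v\<close>. Since \<open>surplus\<close> is convex with
  slope \<open>G\<close>, \<open>(v - bid w) * G w \<le> surplus v\<close> for all \<open>w\<close>; as \<open>F\<close> maps \<open>M\<close> to the uniform
  distribution, this bounds the payoff of any bid by \<open>surplus v\<close>. Bidding \<open>bid v\<close> wins
  against every rival with \<open>F w < F v\<close>, because \<open>bid\<close> is strictly increasing wherever \<open>G\<close>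
  is, and so attains \<open>surplus v\<close>. Registering is never worse than abstaining, as both
  abstaining and bidding one's valuation yield \<open>0\<close>.
\<close>

definition realized_payoff :: "(real \<Rightarrow> real) \<Rightarrow> nat \<Rightarrow> real \<Rightarrow> real \<Rightarrow> (nat \<Rightarrow> real) \<Rightarrow> real" where
  "realized_payoff beta k v b \<omega> =
     (if \<forall>j<k. beta (\<omega> j) \<le> b
      then (v - b) / real (Suc (card {j. j < k \<and> beta (\<omega> j) = b})) else 0)"

lemma win_util_eq_integral:
  "win_util M beta k v b = (\<integral>\<omega>. realized_payoff beta k v b \<omega> \<partial>PiM {..<k} (\<lambda>_. M))"
  by (simp add: win_util_def realized_payoff_def)

lemma realized_payoff_measurable [measurable]:
  assumes [measurable]: "beta \<in> borel_measurable M"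
  shows "realized_payoff beta k v b \<in> borel_measurable (PiM {..<k} (\<lambda>_. M))"
proof -
  have "real (card {j. j < k \<and> P j}) = (\<Sum>j<k. of_bool (P j))" for P :: "nat \<Rightarrow> bool"
    by (simp add: Collect_conj_eq lessThan_def)
  then show ?thesis
    unfolding realized_payoff_def of_nat_Suc by measurable
qed

lemma realized_payoff_le:
  "realized_payoff beta k v b \<omega> \<le> max (v - b) 0" "\<bar>realized_payoff beta k v b \<omega>\<bar> \<le> \<bar>v - b\<bar>"
proof -
  have abs_le: "\<bar>x / real (Suc n)\<bar> \<le> \<bar>x\<bar>" for x :: real and n
  proof -
    have "\<bar>x\<bar> / real (Suc n) \<le> \<bar>x\<bar> / 1"
      by (intro divide_left_mono) auto
    then show ?thesis
      by (simp add: abs_divide)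
  qed
  have "x / real (Suc n) \<le> max x 0" for x :: real and n
    using abs_le[of x n] by (cases "0 \<le> x") (auto simp: divide_nonpos_nonneg)
  then show "realized_payoff beta k v b \<omega> \<le> max (v - b) 0"
    and "\<bar>realized_payoff beta k v b \<omega>\<bar> \<le> \<bar>v - b\<bar>"
    using abs_le by (simp_all add: realized_payoff_def del: of_nat_Suc)
qed

lemma realized_payoff_integrable:
  assumes "prob_space M" "beta \<in> borel_measurable M"
  shows "integrable (PiM {..<k} (\<lambda>_. M)) (realized_payoff beta k v b)"
proof -
  interpret prob_space "PiM {..<k} (\<lambda>_. M)"
    using assms(1) by (rule prob_space_PiM)
  show ?thesis
    using assms(2) realized_payoff_le(2) by (intro integrable_const_bound[where B="\<bar>v - b\<bar>"]) auto
qed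

lemma prob_PiM_all:
  assumes "prob_space M" "{w \<in> space M. Q w} \<in> sets M"
  shows "measure (PiM {..<k} (\<lambda>_. M)) {\<omega> \<in> space (PiM {..<k} (\<lambda>_. M)). \<forall>j<k. Q (\<omega> j)}
           = measure M {w \<in> space M. Q w} ^ k"
proof -
  interpret M: prob_space M
    by (rule assms(1))
  interpret finite_product_sigma_finite "\<lambda>_. M" "{..<k}"
    by unfold_locales auto
  have "{\<omega> \<in> space (PiM {..<k} (\<lambda>_. M)). \<forall>j<k. Q (\<omega> j)} = (\<Pi>\<^sub>E j\<in>{..<k}. {w \<in> space M. Q w})"
    by (rule set_eqI) (auto simp: space_PiM PiE_iff)
  moreover have "emeasure (PiM {..<k} (\<lambda>_. M)) (\<Pi>\<^sub>E j\<in>{..<k}. {w \<in> space M. Q w})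
                   = emeasure M {w \<in> space M. Q w} ^ k"
    using measure_times[of "\<lambda>_. {w \<in> space M. Q w}"] assms(2) by simp
  ultimately show ?thesis
    by (intro measure_eq_emeasure_eq_ennreal) (auto simp: M.emeasure_eq_measure ennreal_power)
qed

lemma win_util_le:
  assumes M: "prob_space M" and beta: "beta \<in> borel_measurable M"
  shows "win_util M beta k v b \<le> max (v - b) 0 * measure M {w \<in> space M. beta w \<le> b} ^ k"
proof -
  interpret prob_space "PiM {..<k} (\<lambda>_. M)"
    using M by (rule prob_space_PiM)
  define S where "S = {\<omega> \<in> space (PiM {..<k} (\<lambda>_. M)). \<forall>j<k. beta (\<omega> j) \<le> b}"
  have S: "S \<in> sets (PiM {..<k} (\<lambda>_. M))"
    unfolding S_def using beta by measurable
  have "win_util M beta k v b \<le> (\<integral>\<omega>. max (v - b) 0 * indicator S \<omega> \<partial>PiM {..<k} (\<lambda>_. M))"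
    unfolding win_util_eq_integral
  proof (rule integral_mono[OF realized_payoff_integrable[OF M beta]])
    show "integrable (PiM {..<k} (\<lambda>_. M)) (\<lambda>\<omega>. max (v - b) 0 * indicator S \<omega>)"
      using S by (simp add: emeasure_finite less_top[symmetric])
    show "realized_payoff beta k v b \<omega> \<le> max (v - b) 0 * indicator S \<omega>"
      if "\<omega> \<in> space (PiM {..<k} (\<lambda>_. M))" for \<omega>
      using that realized_payoff_le(1)[of beta k v b \<omega>]
      by (cases "\<omega> \<in> S") (auto simp: S_def realized_payoff_def)
  qed
  also have "\<dots> = max (v - b) 0 * measure M {w \<in> space M. beta w \<le> b} ^ k"
    using S prob_PiM_all[OF M, of "\<lambda>w. beta w \<le> b" k] beta by (simp add: S_def)
  finally show ?thesis .
qed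

lemma win_util_ge:
  assumes M: "prob_space M" and beta: "beta \<in> borel_measurable M" and "b \<le> v"
  shows "(v - b) * measure M {w \<in> space M. beta w < b} ^ k \<le> win_util M beta k v b"
proof -
  interpret prob_space "PiM {..<k} (\<lambda>_. M)"
    using M by (rule prob_space_PiM)
  define S where "S = {\<omega> \<in> space (PiM {..<k} (\<lambda>_. M)). \<forall>j<k. beta (\<omega> j) < b}"
  have S: "S \<in> sets (PiM {..<k} (\<lambda>_. M))"
    unfolding S_def using beta by measurable
  have "(v - b) * measure M {w \<in> space M. beta w < b} ^ k
          = (\<integral>\<omega>. (v - b) * indicator S \<omega> \<partial>PiM {..<k} (\<lambda>_. M))"
    using S prob_PiM_all[OF M, of "\<lambda>w. beta w < b" k] beta by (simp add: S_def)
  also have "\<dots> \<le> win_util M beta k v b"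
    unfolding win_util_eq_integral
  proof (rule integral_mono[OF _ realized_payoff_integrable[OF M beta]])
    show "integrable (PiM {..<k} (\<lambda>_. M)) (\<lambda>\<omega>. (v - b) * indicator S \<omega>)"
      using S by (simp add: emeasure_finite less_top[symmetric])
    show "(v - b) * indicator S \<omega> \<le> realized_payoff beta k v b \<omega>" for \<omega>
    proof (cases "\<omega> \<in> S")
      case True
      then have no_tie: "{j. j < k \<and> beta (\<omega> j) = b} = {}"
        by (auto simp: S_def)
      show ?thesis
        using True unfolding realized_payoff_def no_tie by (simp add: S_def less_imp_le)
    qed (use \<open>b \<le> v\<close> in \<open>simp add: realized_payoff_def del: of_nat_Suc\<close>)
  qed
  finally show ?thesis .
qed

context real_distribution
begin

lemma sets_Collect_le_less:
  fixes f :: "real \<Rightarrow> real"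
  assumes "f \<in> borel_measurable borel"
  shows "{w. f w \<le> c} \<in> sets M" "{w. f w < c} \<in> sets M"
proof -
  have "{w. f w \<le> c} = f -` {..c} \<inter> space borel" "{w. f w < c} = f -` {..<c} \<inter> space borel"
    by auto
  then show "{w. f w \<le> c} \<in> sets M" "{w. f w < c} \<in> sets M"
    using measurable_sets[OF assms atMost_borel] measurable_sets[OF assms lessThan_borel]
    by (simp_all add: events_eq_borel)
qed

lemma cdf_measurable: "cdf M \<in> borel_measurable borel"
  by (rule borel_measurable_mono) (auto simp: mono_def cdf_nondecreasing)

lemma prob_cdf_le:
  assumes cont: "\<And>x. isCont (cdf M) x" and "0 \<le> \<gamma>"
  shows "measure M {w. cdf M w \<le> \<gamma>} \<le> \<gamma>"
proof (cases "1 \<le> \<gamma> \<or> {w. cdf M w \<le> \<gamma>} = {}")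
  case True
  then show ?thesis
  proof
    assume "1 \<le> \<gamma>"
    then show ?thesis
      using prob_le_1[of "{w. cdf M w \<le> \<gamma>}"] by linarith
  qed (use \<open>0 \<le> \<gamma>\<close> in simp)
next
  case False
  let ?T = "{w. cdf M w \<le> \<gamma>}"
  have "\<gamma> < 1"
    using False by simp
  then obtain N where N: "\<And>x. N \<le> x \<Longrightarrow> \<gamma> < cdf M x"
    using order_tendstoD(1)[OF cdf_lim_at_top_prob] by (auto simp: eventually_at_top_linorder)
  have bdd: "bdd_above ?T"
  proof (rule bdd_aboveI)
    fix w assume "w \<in> ?T"
    then show "w \<le> N"
      using N[of w] by (cases "N \<le> w") auto
  qed
  have "closed ?T"
    using cont by (intro closed_Collect_le continuous_at_imp_continuous_on) auto
  then have "Sup ?T \<in> ?T"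
    using False bdd by (intro closed_contains_Sup) auto
  have "measure M ?T \<le> measure M {..Sup ?T}"
    using cSup_upper[OF _ bdd] by (intro finite_measure_mono) auto
  also have "\<dots> \<le> \<gamma>"
    using \<open>Sup ?T \<in> ?T\<close> by (simp add: cdf_def)
  finally show ?thesis .
qed

lemma prob_cdf_less:
  assumes cont: "\<And>x. isCont (cdf M) x" and "\<gamma> \<le> 1"
  shows "\<gamma> \<le> measure M {w. cdf M w < \<gamma>}"
proof (cases "\<gamma> \<le> 0 \<or> (\<forall>w. cdf M w < \<gamma>)")
  case True
  then consider "\<gamma> \<le> 0" | "{w. cdf M w < \<gamma>} = space M"
    by auto
  then show ?thesis
  proof cases
    case 1
    then show ?thesis
      using measure_nonneg[of M "{w. cdf M w < \<gamma>}"] by linarith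
  qed (use \<open>\<gamma> \<le> 1\<close> prob_space in simp)
next
  case False
  let ?U = "{w. cdf M w < \<gamma>}"
  obtain x1 where x1: "\<gamma> \<le> cdf M x1"
    using False by (auto simp: not_less)
  have bdd: "bdd_above ?U"
  proof (rule bdd_aboveI)
    fix w assume "w \<in> ?U"
    then show "w \<le> x1"
      using x1 cdf_nondecreasing[of x1 w] by (cases "x1 \<le> w") auto
  qed
  have "0 < \<gamma>"
    using False by simp
  then obtain N where "\<And>x. x \<le> N \<Longrightarrow> cdf M x < \<gamma>"
    using order_tendstoD(2)[OF cdf_lim_at_bot] by (auto simp: eventually_at_bot_linorder)
  then have ne: "?U \<noteq> {}"
    by auto
  define t where "t = Sup ?U"
  have "{..<t} \<subseteq> ?U"
  proof
    fix y assume "y \<in> {..<t}"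
    then obtain u where "u \<in> ?U" "y < u"
      using less_cSup_iff[OF ne bdd] by (auto simp: t_def)
    then show "y \<in> ?U"
      using cdf_nondecreasing[of y u] by auto
  qed
  then have "measure M {..<t} \<le> measure M ?U"
    using sets_Collect_le_less(2)[OF cdf_measurable] by (rule finite_measure_mono)
  moreover have "\<gamma> \<le> cdf M t"
  proof (rule ccontr)
    assume "\<not> \<gamma> \<le> cdf M t"
    moreover have "(cdf M \<longlongrightarrow> cdf M t) (at_right t)"
      using cont[of t] by (simp add: isCont_def filterlim_at_split)
    ultimately have "eventually (\<lambda>y. cdf M y < \<gamma>) (at_right t)"
      by (simp add: not_le order_tendstoD(2))
    then obtain c where c: "t < c" "\<And>y. t < y \<Longrightarrow> y < c \<Longrightarrow> cdf M y < \<gamma>"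
      by (auto simp: eventually_at_right_field)
    then have "(t + c) / 2 \<in> ?U"
      by auto
    then show False
      using cSup_upper[OF _ bdd] c(1) by (fastforce simp: t_def)
  qed
  moreover have "cdf M t = measure M {..<t}"
  proof -
    have "measure M {t} = 0"
      using cont isCont_cdf by blast
    then show ?thesis
      using finite_measure_Union[of "{..<t}" "{t}"]
      by (simp add: cdf_def ivl_disj_un(2)[symmetric] Un_commute)
  qed
  ultimately show ?thesis
    by linarith
qed

end

locale equilibrium_bid =
  fixes G :: "real \<Rightarrow> real"
  assumes mono_G: "mono G"
    and G_nonpos: "\<And>x. x \<le> 0 \<Longrightarrow> G x = 0"
    and isCont_G: "\<And>x. isCont G x"
begin

definition surplus :: "real \<Rightarrow> real" where
  "surplus x = integral {0..x} G"

definition bid :: "real \<Rightarrow> real" where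
  "bid w = w - inverse (G w) * surplus w"

lemma G_nonneg: "0 \<le> G x"
  using monoD[OF mono_G, of "min x 0" x] G_nonpos[of "min x 0"] by simp

lemma G_integrable: "G integrable_on {a..b}"
  using mono_G by (intro integrable_on_mono_on) (auto simp: mono_on_def mono_def)

lemma integral_G_nonpos: "b \<le> 0 \<Longrightarrow> integral {a..b} G = 0"
  using integral_cong[of "{a..b}" G "\<lambda>_. 0"] G_nonpos by simp

lemma surplus_nonpos: "x \<le> 0 \<Longrightarrow> surplus x = 0"
  unfolding surplus_def by (cases "x = 0") (auto intro: integral_G_nonpos)

lemma surplus_diff:
  assumes "w \<le> v"
  shows "surplus v - surplus w = integral {w..v} G"
proof -
  have "integral {min w 0..x} G = surplus x" if "w \<le> x" for x
  proof (cases "0 \<le> x")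
    case True
    then show ?thesis
      using Henstock_Kurzweil_Integration.integral_combine[OF _ True G_integrable, of "min w 0"]
        integral_G_nonpos[of 0 "min w 0"]
      by (simp add: surplus_def)
  qed (use that in \<open>simp add: integral_G_nonpos surplus_nonpos\<close>)
  then show ?thesis
    using Henstock_Kurzweil_Integration.integral_combine[OF _ assms G_integrable, of "min w 0"] assms
    by simp
qed

lemma surplus_diff_bounds:
  assumes "w \<le> v"
  shows "(v - w) * G w \<le> surplus v - surplus w" and "surplus v - surplus w \<le> (v - w) * G v"
proof -
  have "integral {w..v} (\<lambda>_. G w) \<le> integral {w..v} G"
    and "integral {w..v} G \<le> integral {w..v} (\<lambda>_. G v)"
    by (rule integral_le; auto simp: G_integrable monoD[OF mono_G])+
  with assms show "(v - w) * G w \<le> surplus v - surplus w" "surplus v - surplus w \<le> (v - w) * G v"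
    by (simp_all add: surplus_diff)
qed

lemma surplus_nonneg: "0 \<le> surplus x"
  using surplus_diff_bounds(1)[of 0 x] surplus_nonpos[of 0] surplus_nonpos[of x] G_nonpos[of 0]
  by (cases "0 \<le> x") auto

lemma surplus_eq_0: "G x = 0 \<Longrightarrow> surplus x = 0"
  using surplus_diff_bounds(2)[of 0 x] surplus_nonpos[of 0] surplus_nonpos[of x]
    surplus_nonneg[of x]
  by (cases "0 \<le> x") auto

lemma surplus_le: "0 \<le> v \<Longrightarrow> surplus v \<le> v * G v"
  using surplus_diff_bounds(2)[of 0 v] surplus_nonpos[of 0] by simp

lemma mono_surplus: "mono surplus"
proof
  fix x y :: real
  assume "x \<le> y"
  then have "0 \<le> (y - x) * G x"
    using G_nonneg by simp
  also have "\<dots> \<le> surplus y - surplus x"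
    using \<open>x \<le> y\<close> by (rule surplus_diff_bounds(1))
  finally show "surplus x \<le> surplus y"
    by simp
qed

lemma bid_measurable [measurable]: "bid \<in> borel_measurable borel"
proof -
  have [measurable]: "G \<in> borel_measurable borel" "surplus \<in> borel_measurable borel"
    using borel_measurable_mono mono_G mono_surplus by blast+
  show ?thesis
    unfolding bid_def by measurable
qed

lemma bid_le: "bid v \<le> v"
  using surplus_nonneg[of v] G_nonneg[of v] by (simp add: bid_def)

lemma truthful_payoff_eq_surplus: "0 < G v \<Longrightarrow> (v - bid v) * G v = surplus v"
  by (simp add: bid_def)

lemma deviation_payoff_le_surplus: "(v - bid w) * G w \<le> surplus v"
proof (cases "G w = 0")
  case False
  then have "(v - bid w) * G w = surplus w + (v - w) * G w"
    by (simp add: bid_def field_simps)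
  also have "\<dots> \<le> surplus v"
    using surplus_diff_bounds(1)[of w v] surplus_diff_bounds(2)[of v w]
    by (cases "w \<le> v") (auto simp: algebra_simps)
  finally show ?thesis .
qed (simp add: surplus_nonneg)

text \<open>Strictness needs continuity of \<open>G\<close>: \<open>G < G v\<close> on a right neighbourhood of \<open>w\<close>.\<close>
lemma bid_less_bid:
  assumes less: "G w < G v"
  shows "bid w < bid v"
proof -
  have "w < v"
    using less mono_G by (metis monoD not_le)
  have "G v > 0"
    using less G_nonneg[of w] by simp
  obtain c where c: "w < c" "\<And>y. w < y \<Longrightarrow> y < c \<Longrightarrow> G y < G v"
    using order_tendstoD(2)[OF isCont_G[of w, unfolded isCont_def] less]
    by (auto simp: eventually_at_split eventually_at_right_field)
  define u where "u = (w + min c v) / 2"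
  have u: "w < u" "u < v" "G u < G v"
    using c \<open>w < v\<close> by (auto simp: u_def)
  have "surplus v - surplus w = (surplus v - surplus u) + (surplus u - surplus w)"
    by simp
  also have "\<dots> \<le> (v - u) * G v + (u - w) * G u"
    using surplus_diff_bounds(2)[of u v] surplus_diff_bounds(2)[of w u] u by simp
  also have "\<dots> < (v - u) * G v + (u - w) * G v"
    using u by simp
  also have "\<dots> = (v - w) * G v"
    by (simp add: algebra_simps)
  finally have "surplus v - surplus w < G v * v - G v * w"
    by (simp add: algebra_simps)
  moreover have "G v * bid w \<le> G v * w - surplus w"
  proof (cases "G w = 0")
    case False
    then have "1 \<le> G v * inverse (G w)"
      using less G_nonneg[of w] by (simp add: field_simps)
    then have "1 * surplus w \<le> (G v * inverse (G w)) * surplus w"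
      by (rule mult_right_mono[OF _ surplus_nonneg])
    then show ?thesis
      by (simp add: bid_def right_diff_distrib mult.assoc)
  qed (simp add: bid_def surplus_eq_0)
  moreover have "G v * bid v = G v * v - surplus v"
    using \<open>G v > 0\<close> by (simp add: bid_def algebra_simps)
  ultimately have "G v * bid w < G v * bid v"
    by linarith
  then show ?thesis
    using \<open>G v > 0\<close> by simp
qed

end

locale continuous_valuations = real_distribution M for M +
  assumes isCont_cdf_M: "\<And>x. isCont (cdf M) x"
    and cdf_0: "cdf M 0 = 0"
begin

lemma AE_cdf_pos: "AE v in M. 0 < cdf M v"
proof -
  have "measure M {w. cdf M w \<le> 0} = 0"
    using prob_cdf_le[OF isCont_cdf_M order_refl] measure_nonneg[of M "{w. cdf M w \<le> 0}"]
    by linarith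
  then have "{w. cdf M w \<le> 0} \<in> null_sets M"
    using sets_Collect_le_less(1)[OF cdf_measurable]
    by (simp add: null_sets_def emeasure_eq_measure)
  then show ?thesis
    by (rule AE_I') (auto simp: not_less)
qed

end

locale rival_valuations = continuous_valuations M for M +
  fixes k :: nat
  assumes k_pos: "0 < k"
begin

sublocale equilibrium_bid "\<lambda>u. cdf M u ^ k"
proof
  show "mono (\<lambda>u. cdf M u ^ k)"
    by (intro monoI power_mono cdf_nondecreasing cdf_nonneg)
  show "cdf M x ^ k = 0" if "x \<le> 0" for x
    using cdf_nondecreasing[OF that] cdf_nonneg[of x] cdf_0 k_pos by simp
  show "isCont (\<lambda>u. cdf M u ^ k) x" for x
    using isCont_cdf_M by simp
qed

lemma bid_measurable_M [measurable]: "bid \<in> borel_measurable M"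
  using bid_measurable by (simp add: measurable_cong_sets[OF events_eq_borel refl])

lemma be_eq_bid: "be (cdf M) w (Suc k) = bid w"
  by (simp add: be_def bid_def surplus_def)

lemma win_util_le_surplus: "win_util M bid k v b \<le> surplus v"
proof (cases "b < v")
  case True
  define \<gamma> where "\<gamma> = root k (surplus v / (v - b))"
  have "0 \<le> \<gamma>"
    using surplus_nonneg[of v] True
    by (auto simp: \<gamma>_def intro!: real_root_ge_zero divide_nonneg_pos)
  have "{w. bid w \<le> b} \<subseteq> {w. cdf M w \<le> \<gamma>}"
  proof safe
    fix w assume "bid w \<le> b"
    then have "(v - b) * cdf M w ^ k \<le> (v - bid w) * cdf M w ^ k"
      by (intro mult_right_mono) (simp_all add: cdf_nonneg)
    also have "\<dots> \<le> surplus v"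
      by (rule deviation_payoff_le_surplus)
    finally have "cdf M w ^ k \<le> surplus v / (v - b)"
      using True by (simp add: field_simps)
    then have "root k (cdf M w ^ k) \<le> \<gamma>"
      using k_pos by (simp add: \<gamma>_def)
    then show "cdf M w \<le> \<gamma>"
      using k_pos cdf_nonneg[of w] by (simp add: real_root_power_cancel)
  qed
  then have "measure M {w. bid w \<le> b} \<le> \<gamma>"
    using prob_cdf_le[OF isCont_cdf_M \<open>0 \<le> \<gamma>\<close>]
      finite_measure_mono[OF _ sets_Collect_le_less(1)[OF cdf_measurable]]
    by (meson order_trans)
  then have "measure M {w. bid w \<le> b} ^ k \<le> \<gamma> ^ k"
    by (intro power_mono) simp_all
  also have "\<gamma> ^ k = surplus v / (v - b)"
    using k_pos surplus_nonneg[of v] True by (simp add: \<gamma>_def)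
  finally have "(v - b) * measure M {w. bid w \<le> b} ^ k \<le> surplus v"
    using True by (simp add: field_simps)
  then show ?thesis
    using win_util_le[OF prob_space_axioms bid_measurable_M, of k v b] True by simp
next
  case False
  then show ?thesis
    using win_util_le[OF prob_space_axioms bid_measurable_M, of k v b] surplus_nonneg[of v] by simp
qed

lemma surplus_le_win_util:
  assumes "0 < cdf M v"
  shows "surplus v \<le> win_util M bid k v (bid v)"
proof -
  have "{w. cdf M w < cdf M v} \<subseteq> {w. bid w < bid v}"
    using bid_less_bid cdf_nonneg k_pos by (auto intro: power_strict_mono)
  then have "cdf M v \<le> measure M {w. bid w < bid v}"
    using prob_cdf_less[OF isCont_cdf_M cdf_bounded_prob]
      finite_measure_mono[OF _ sets_Collect_le_less(2)[OF bid_measurable]]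
    by (meson order_trans)
  then have "(v - bid v) * cdf M v ^ k \<le> (v - bid v) * measure M {w. bid w < bid v} ^ k"
    using bid_le[of v] cdf_nonneg[of v] by (intro mult_left_mono power_mono) auto
  then show ?thesis
    using truthful_payoff_eq_surplus[of v] assms
      win_util_ge[OF prob_space_axioms bid_measurable_M bid_le, of v k]
    by simp
qed

lemma bid_best_response:
  assumes "0 < cdf M v"
  shows "win_util M bid k v b \<le> win_util M bid k v (bid v)"
  using win_util_le_surplus surplus_le_win_util[OF assms] by (rule order_trans)

lemma win_util_bid_le:
  assumes "0 < cdf M v"
  shows "win_util M bid k v (bid v) \<le> v"
proof -
  have "0 < v"
    using assms cdf_0 cdf_nondecreasing[of v 0] by (cases "0 < v") auto
  then have "surplus v \<le> v * 1"
    using surplus_le[of v] power_le_one[OF cdf_nonneg cdf_bounded_prob, of v k]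
    by (meson less_imp_le mult_left_mono order_trans)
  then show ?thesis
    using win_util_le_surplus[of v "bid v"] by simp
qed

end

context continuous_valuations
begin

lemma be_best_response:
  assumes "2 \<le> n" and "0 < cdf M v"
  shows "win_util M (\<lambda>w. be (cdf M) w n) (n - 1) v b
           \<le> win_util M (\<lambda>w. be (cdf M) w n) (n - 1) v (be (cdf M) v n)"
    and "win_util M (\<lambda>w. be (cdf M) w n) (n - 1) v (be (cdf M) v n) \<le> v"
proof -
  interpret rival_valuations M "n - 1"
    using assms(1) by unfold_locales simp
  have be_bid: "be (cdf M) w n = bid w" for w
    using be_eq_bid[of w] assms(1) by (simp add: Suc_diff_le)
  show "win_util M (\<lambda>w. be (cdf M) w n) (n - 1) v b
          \<le> win_util M (\<lambda>w. be (cdf M) w n) (n - 1) v (be (cdf M) v n)"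
    using bid_best_response[OF assms(2)] by (simp add: be_bid)
  show "win_util M (\<lambda>w. be (cdf M) w n) (n - 1) v (be (cdf M) v n) \<le> v"
    using win_util_bid_le[OF assms(2)] by (simp add: be_bid)
qed

end

lemma win_util_at_valuation: "win_util M beta k v v = 0"
proof -
  have "realized_payoff beta k v v = (\<lambda>_. 0)"
    by (simp add: realized_payoff_def fun_eq_iff)
  then show ?thesis
    by (simp add: win_util_eq_integral)
qed

lemma expectation_mono_bounded:
  fixes f h :: "'a \<Rightarrow> real"
  assumes "\<And>x. x \<in> set_pmf q \<Longrightarrow> f x \<le> h x"
    and "\<And>x. x \<in> set_pmf q \<Longrightarrow> 0 \<le> h x" and "\<And>x. x \<in> set_pmf q \<Longrightarrow> h x \<le> B"
  shows "measure_pmf.expectation q f \<le> measure_pmf.expectation q h"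
proof -
  have "integrable q h"
    using assms(2,3)
    by (intro measure_pmf.integrable_const_bound[where B=B]) (auto simp: AE_measure_pmf_iff)
  moreover have "0 \<le> measure_pmf.expectation q h"
    using assms(2) by (intro integral_nonneg_AE) (simp add: AE_measure_pmf_iff)
  ultimately show ?thesis
    using assms(1) by (cases "integrable q f")
      (auto intro!: integral_mono_AE simp: AE_measure_pmf_iff not_integrable_integral_eq)
qed

lemma interim_payoff_le_of_best_response:
  assumes best: "\<And>n b. n \<in> set_pmf q \<Longrightarrow>
      win_util M (\<lambda>w. strat w n) (n - 1) v b \<le> win_util M (\<lambda>w. strat w n) (n - 1) v (strat v n)"
    and bounded: "\<And>n. n \<in> set_pmf q \<Longrightarrow> win_util M (\<lambda>w. strat w n) (n - 1) v (strat v n) \<le> B"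
  shows "interim_payoff M strat q v r d \<le> interim_payoff M strat q v True (strat v)"
proof -
  have nonneg: "0 \<le> win_util M (\<lambda>w. strat w n) (n - 1) v (strat v n)" if "n \<in> set_pmf q" for n
    using best[OF that, of v] by (simp add: win_util_at_valuation)
  show ?thesis
    unfolding interim_payoff_def
    by (rule expectation_mono_bounded) (use best bounded nonneg in auto)
qed

theorem proposition4:
  fixes M :: "real measure" and p :: "nat pmf"
  assumes "real_distribution M"
    and "\<forall>x. isCont (cdf M) x"
    and "cdf M 0 = 0"
    and "set_pmf p \<subseteq> {2..}"
  shows "all_register_equilibrium M p (\<lambda>v n. be (cdf M) v n)"
proof -
  interpret continuous_valuations M
    using assms(1-3) by (simp add: continuous_valuations_def continuous_valuations_axioms_def)
  have best: "interim_payoff M (\<lambda>v n. be (cdf M) v n) q v r d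
          \<le> interim_payoff M (\<lambda>v n. be (cdf M) v n) q v True (\<lambda>n. be (cdf M) v n)"
    if "0 < cdf M v" and "set_pmf q \<subseteq> set_pmf p" for v q r d
    using that assms(4) be_best_response
    by (intro interim_payoff_le_of_best_response[where B = v]) auto
  show ?thesis
    unfolding all_register_equilibrium_def using AE_cdf_pos by eventually_elim (blast intro: best)
qed

end
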